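(* Let $\{T(t)\}_{t\in S}\subset L(Y)$ be a dual semigroup representation on $Y\subset X^*$. If $y\in Y$ is both a flight vector and reversible, then $y=0$.
   Context: $X$ is a Banach space, $Y\subset X^*$ a subspace, $S$ an abelian semitopological semigroup (additively written, with unit, Hausdorff, separately continuous addition). A dual semigroup representation is a family $\{T(t)\}_{t\in S}\subset L(Y)$ with (1) $T(s+t)=T(s)T(t)$; (2) $s\mapsto\langle x,T(s)y\rangle$ continuous for all $x\in X,y\in Y$; (3) the $\sigma(X^*,X)$-closure of $O(y)=\{T(t)y:t\in S\}$ lies in $Y$ for each $y\in Y$; (4) each $T(s)$ maps the $\sigma(X^*,X)$-closed absolutely convex hull of $O(y)$ into itself and is $\sigma(X^*,X)$-continuous there. Limits $w^*\text{-}\lim$ in $Y$ are with respect to $\sigma(X^*,X)$. $y\in Y$ is reversible if for every net $(s_\alpha)$ in $S$ for which $w^*\text{-}\lim_\alpha T(s_\alpha)y$ exists there is a net $(t_\gamma)$ in $S$ with $w^*\text{-}\lim_\gamma w^*\text{-}\lim_\alpha T(t_\gamma)T(s_\alpha)y=y$. $y$ is a flight vector if there is a net $(s_\alpha)$ in $S$ with $w^*\text{-}\lim_\alpha T(s_\alpha)y=0$. *)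

theory Defs
  imports "HOL-Analysis.Analysis"
begin

definition wstar :: "('x::real_normed_vector \<Rightarrow>\<^sub>L real) topology" where
  "wstar = pullback_topology UNIV (\<lambda>f x. blinfun_apply f x) (product_topology (\<lambda>_. euclideanreal) UNIV)"

definition orbit :: "('s \<Rightarrow> 'y \<Rightarrow> 'y) \<Rightarrow> 'y \<Rightarrow> 'y set" where
  "orbit T y = (\<lambda>t. T t y) ` UNIV"

definition absconv_hull :: "'a::real_vector set \<Rightarrow> 'a set" where
  "absconv_hull A = convex hull (\<Union>c\<in>{c::real. \<bar>c\<bar> \<le> 1}. (\<lambda>v. c *\<^sub>R v) ` A)"

definition wstar_absconv :: "('x::real_normed_vector \<Rightarrow>\<^sub>L real) set \<Rightarrow> ('x \<Rightarrow>\<^sub>L real) set" where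
  "wstar_absconv A = wstar closure_of (absconv_hull A)"

text \<open>Nets in S are represented by proper filters on S (tail filters of nets).\<close>
definition dual_semigroup_rep ::
  "('x::banach \<Rightarrow>\<^sub>L real) set \<Rightarrow> ('s::{comm_monoid_add,t2_space} \<Rightarrow> ('x \<Rightarrow>\<^sub>L real) \<Rightarrow> ('x \<Rightarrow>\<^sub>L real)) \<Rightarrow> bool" where
  "dual_semigroup_rep Y T \<longleftrightarrow>
     subspace Y \<and>
     (\<forall>s. (\<forall>y\<in>Y. T s y \<in> Y) \<and>
          (\<forall>y1\<in>Y. \<forall>y2\<in>Y. T s (y1 + y2) = T s y1 + T s y2) \<and>
          (\<forall>c. \<forall>y\<in>Y. T s (c *\<^sub>R y) = c *\<^sub>R T s y) \<and>
          (\<exists>C. \<forall>y\<in>Y. norm (T s y) \<le> C * norm y)) \<and>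
     (\<forall>s t. \<forall>y\<in>Y. T (s + t) y = T s (T t y)) \<and>
     (\<forall>x. \<forall>y\<in>Y. continuous_on UNIV (\<lambda>s. blinfun_apply (T s y) x)) \<and>
     (\<forall>y\<in>Y. wstar closure_of (orbit T y) \<subseteq> Y) \<and>
     (\<forall>y\<in>Y. \<forall>s. continuous_map (subtopology wstar (wstar_absconv (orbit T y)))
                               (subtopology wstar (wstar_absconv (orbit T y))) (T s))"

definition flight_vector :: "('s \<Rightarrow> ('x::real_normed_vector \<Rightarrow>\<^sub>L real) \<Rightarrow> ('x \<Rightarrow>\<^sub>L real)) \<Rightarrow> ('x \<Rightarrow>\<^sub>L real) \<Rightarrow> bool" where
  "flight_vector T y \<longleftrightarrow> (\<exists>F. F \<noteq> bot \<and> limitin wstar (\<lambda>s. T s y) 0 F)"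

definition reversible :: "('s \<Rightarrow> ('x::real_normed_vector \<Rightarrow>\<^sub>L real) \<Rightarrow> ('x \<Rightarrow>\<^sub>L real)) \<Rightarrow> ('x \<Rightarrow>\<^sub>L real) \<Rightarrow> bool" where
  "reversible T y \<longleftrightarrow>
     (\<forall>F. F \<noteq> bot \<longrightarrow> (\<exists>l. limitin wstar (\<lambda>s. T s y) l F) \<longrightarrow>
        (\<exists>G z. G \<noteq> bot \<and>
           (\<forall>\<^sub>F t in G. limitin wstar (\<lambda>s. T t (T s y)) (z t) F) \<and>
           limitin wstar z y G))"

end

theory Submission
  imports Defs
begin

text \<open>Every weak-star limit of the orbit of \<open>y\<close> lies in the weak-star closed absolutely
  convex hull of the orbit, on which each \<open>T(t)\<close> is weak-star continuous. Hence, if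
  \<open>T(s\<^sub>\<alpha>) y \<rightarrow> 0\<close>, then \<open>T(t) T(s\<^sub>\<alpha>) y \<rightarrow> T(t) 0 = 0\<close> for every \<open>t\<close>, so the iterated
  limit in the definition of reversibility is \<open>0\<close>; as weak-star limits are unique, \<open>y = 0\<close>.\<close>

lemma topspace_wstar [simp]: "topspace wstar = UNIV"
  unfolding wstar_def topspace_pullback_topology by simp

lemma continuous_map_wstar_eval: "continuous_map wstar euclideanreal (\<lambda>f. blinfun_apply f x)"
proof -
  have "continuous_map (product_topology (\<lambda>_. euclideanreal) UNIV) euclideanreal (\<lambda>g. g x)"
    by (rule continuous_map_product_projection) simp
  then have "continuous_map wstar euclideanreal ((\<lambda>g. g x) \<circ> (\<lambda>f x. blinfun_apply f x))"
    unfolding wstar_def by (rule continuous_map_pullback)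
  then show ?thesis
    by (simp add: comp_def)
qed

lemma limitin_wstar_imp_tendsto_eval:
  assumes "limitin wstar f l F"
  shows "((\<lambda>s. blinfun_apply (f s) x) \<longlongrightarrow> blinfun_apply l x) F"
  using continuous_map_limit[OF continuous_map_wstar_eval assms] by (simp add: comp_def)

lemma limitin_wstar_unique:
  assumes "limitin wstar f l F" "limitin wstar f m F" "F \<noteq> bot"
  shows "l = m"
proof (rule blinfun_eqI)
  fix x
  show "blinfun_apply l x = blinfun_apply m x"
    using assms(3) limitin_wstar_imp_tendsto_eval[OF assms(1)]
      limitin_wstar_imp_tendsto_eval[OF assms(2)]
    by (rule tendsto_unique)
qed

lemma limitin_in_closure_of:
  assumes "limitin X f l F" "F \<noteq> bot" "\<forall>\<^sub>F a in F. f a \<in> S"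
  shows "l \<in> X closure_of S"
  unfolding in_closure_of
proof (intro conjI allI impI)
  show "l \<in> topspace X"
    using assms(1) by (rule limitin_topspace)
  fix U
  assume "l \<in> U \<and> openin X U"
  then have "\<forall>\<^sub>F a in F. f a \<in> S \<and> f a \<in> U"
    using assms(1,3) by (simp add: limitin_def eventually_conj_iff)
  then show "\<exists>v. v \<in> S \<and> v \<in> U"
    using assms(2) eventually_happens' by blast
qed

lemma subset_absconv_hull: "A \<subseteq> absconv_hull A"
  unfolding absconv_hull_def
  by (rule order_trans[OF _ hull_subset]) (force intro: exI[where x=1])

lemma closure_of_subset_wstar_absconv: "wstar closure_of A \<subseteq> wstar_absconv A"
  unfolding wstar_absconv_def by (rule closure_of_mono[OF subset_absconv_hull])

lemma dual_semigroup_rep_zero: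
  assumes "dual_semigroup_rep Y T"
  shows "T s 0 = 0"
proof -
  have "0 \<in> Y"
    using assms subspace_0 unfolding dual_semigroup_rep_def by blast
  then have "T s (0 *\<^sub>R 0) = 0 *\<^sub>R T s 0"
    using assms unfolding dual_semigroup_rep_def by blast
  then show ?thesis
    by simp
qed

lemma dual_semigroup_rep_limitin_orbit:
  assumes rep: "dual_semigroup_rep Y T" and "y \<in> Y" and "F \<noteq> bot"
    and lim: "limitin wstar (\<lambda>s. T s y) l F"
  shows "limitin wstar (\<lambda>s. T t (T s y)) (T t l) F"
proof -
  define A where "A = wstar_absconv (orbit T y)"
  have orbit_A: "orbit T y \<subseteq> A"
    unfolding A_def using closure_of_subset[of "orbit T y" wstar] closure_of_subset_wstar_absconv
    by auto
  have "l \<in> wstar closure_of orbit T y"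
    using lim \<open>F \<noteq> bot\<close> by (rule limitin_in_closure_of) (simp add: orbit_def)
  then have "limitin (subtopology wstar A) (\<lambda>s. T s y) l F"
    using lim orbit_A closure_of_subset_wstar_absconv
    unfolding limitin_subtopology A_def by (auto simp: orbit_def intro!: always_eventually)
  moreover have "continuous_map (subtopology wstar A) (subtopology wstar A) (T t)"
    using rep \<open>y \<in> Y\<close> unfolding dual_semigroup_rep_def A_def by blast
  ultimately show ?thesis
    using continuous_map_limit by (fastforce simp: limitin_subtopology comp_def)
qed

theorem proposition3p7:
  fixes Y :: "('x::banach \<Rightarrow>\<^sub>L real) set"
    and T :: "'s::{comm_monoid_add,t2_space} \<Rightarrow> ('x \<Rightarrow>\<^sub>L real) \<Rightarrow> ('x \<Rightarrow>\<^sub>L real)"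
    and y :: "'x \<Rightarrow>\<^sub>L real"
  assumes sep_cont: "\<forall>s::'s. continuous_on UNIV (\<lambda>t. s + t)"
    and rep: "dual_semigroup_rep Y T"
    and yY: "y \<in> Y"
    and flight: "flight_vector T y"
    and rev: "reversible T y"
  shows "y = 0"
proof -
  obtain F where F: "F \<noteq> bot" "limitin wstar (\<lambda>s. T s y) 0 F"
    using flight unfolding flight_vector_def by blast
  then obtain G z where G: "G \<noteq> bot" "\<forall>\<^sub>F t in G. limitin wstar (\<lambda>s. T t (T s y)) (z t) F"
      and z_y: "limitin wstar z y G"
    using rev unfolding reversible_def by blast
  have iterate_to_0: "limitin wstar (\<lambda>s. T t (T s y)) 0 F" for t
    using dual_semigroup_rep_limitin_orbit[OF rep yY F] dual_semigroup_rep_zero[OF rep] by simp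
  have "\<forall>\<^sub>F t in G. z t = 0"
    using G(2) by (rule eventually_mono) (use F(1) iterate_to_0 limitin_wstar_unique in blast)
  then have "limitin wstar z 0 G"
    by (simp add: limitin_eventually)
  then show ?thesis
    using limitin_wstar_unique[OF z_y _ G(1)] by simp
qed

end
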